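(* Let $\Gamma$ be an extended Dynkin graph with standard integral Cartan matrix, and let $v\in\mathbb{R}^I$ be any configuration. Suppose that it is possible, beginning with $v$, to fire $r$ vertices (counted with multiplicity) of amplitude $<-1$ successively until there are no vertices of amplitude $<-1$ left. Consider any other sequence, beginning with $v$, of firings of $s$ vertices of amplitude $<-1$. Then $s\le r$, and this sequence can be extended to a sequence of $r$ firings of vertices of amplitude $<-1$ which terminates at the same configuration as the first sequence.
   Context: $\Gamma$ is an extended Dynkin graph (Dynkin diagram of an affine Weyl group) with vertex set $I$ and standard integral generalized Cartan matrix $C=(c_{ij})$. Configurations are $v\in\mathbb{R}^I$. Firing vertex $i$ replaces $v$ by $f_i(v)$, where $f_i(v)_i=-v_i$, $f_i(v)_j=v_j-c_{ij}v_i$ if $j$ is adjacent to $i$, and $f_i(v)_j=v_j$ otherwise. "Firing a vertex of amplitude $<-1$" means firing $i$ when the current value $v_i$ satisfies $v_i<-1$. *)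

theory Defs
  imports Complex_Main
begin

definition gen_cartan :: "('i \<Rightarrow> 'i \<Rightarrow> int) \<Rightarrow> bool" where
  "gen_cartan C \<longleftrightarrow> (\<forall>i. C i i = 2) \<and> (\<forall>i j. i \<noteq> j \<longrightarrow> C i j \<le> 0)
     \<and> (\<forall>i j. C i j = 0 \<longleftrightarrow> C j i = 0)"

definition adjacent :: "('i \<Rightarrow> 'i \<Rightarrow> int) \<Rightarrow> 'i \<Rightarrow> 'i \<Rightarrow> bool" where
  "adjacent C i j \<longleftrightarrow> i \<noteq> j \<and> C i j \<noteq> 0"

definition indecomposable :: "('i \<Rightarrow> 'i \<Rightarrow> int) \<Rightarrow> bool" where
  "indecomposable C \<longleftrightarrow> (\<forall>i j. (adjacent C)\<^sup>*\<^sup>* i j)"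

text \<open>Kac's definition of affine type: an indecomposable GCM admitting a vector
  with all entries positive in its kernel.  These are exactly the
  (generalized Cartan matrices of) extended Dynkin diagrams.\<close>
definition extended_dynkin :: "('i::finite \<Rightarrow> 'i \<Rightarrow> int) \<Rightarrow> bool" where
  "extended_dynkin C \<longleftrightarrow> gen_cartan C \<and> indecomposable C \<and>
     (\<exists>u :: 'i \<Rightarrow> real. (\<forall>i. u i > 0) \<and> (\<forall>i. (\<Sum>j\<in>UNIV. of_int (C i j) * u j) = 0))"

definition fire :: "('i \<Rightarrow> 'i \<Rightarrow> int) \<Rightarrow> 'i \<Rightarrow> ('i \<Rightarrow> real) \<Rightarrow> ('i \<Rightarrow> real)" where
  "fire C i v = (\<lambda>j. if j = i then - v i
                     else if adjacent C i j then v j - of_int (C i j) * v i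
                     else v j)"

fun legal_seq :: "('i \<Rightarrow> 'i \<Rightarrow> int) \<Rightarrow> ('i \<Rightarrow> real) \<Rightarrow> 'i list \<Rightarrow> bool" where
  "legal_seq C v [] = True"
| "legal_seq C v (i # is) = (v i < -1 \<and> legal_seq C (fire C i v) is)"

fun run :: "('i \<Rightarrow> 'i \<Rightarrow> int) \<Rightarrow> ('i \<Rightarrow> real) \<Rightarrow> 'i list \<Rightarrow> ('i \<Rightarrow> real)" where
  "run C v [] = v"
| "run C v (i # is) = run C (fire C i v) is"

definition terminal :: "('i \<Rightarrow> real) \<Rightarrow> bool" where
  "terminal v \<longleftrightarrow> (\<forall>i. \<not> v i < -1)"

end

theory Submission
  imports Defs
begin

text \<open>Two distinct vertices of amplitude
  \<open>< -1\<close> either satisfy a braid relation (both alternating firing words of some length \<open>m > 0\<close>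
  are legal and lead to the same configuration; \<open>m = 2, 3, 4, 6\<close> for the finite rank-two types)
  or, when \<open>c\<^sub>i\<^sub>j c\<^sub>j\<^sub>i \<ge> 4\<close>, can be fired alternately forever. Induction on the length \<open>r\<close> of
  the terminating sequence \<open>i # xs\<close> then shows that every other legal first move \<open>j\<close> is
  followed by a terminating sequence of length \<open>r - 1\<close> with the same end: below \<open>xs\<close> no legal
  sequence is longer than \<open>r - 1\<close>, which rules out endless alternation, and a braid word is
  completed by the induction hypothesis and then transported across the braid relation.\<close>

lemma fire_gen_cartan:
  assumes "gen_cartan C"
  shows "fire C i v = (\<lambda>k. v k - of_int (C i k) * v i)"
  using assms unfolding fire_def gen_cartan_def adjacent_def
  by (auto simp: fun_eq_iff)

lemma legal_seq_append:
  "legal_seq C v (xs @ ys) \<longleftrightarrow> legal_seq C v xs \<and> legal_seq C (run C v xs) ys"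
  by (induction xs arbitrary: v) auto

lemma run_append: "run C v (xs @ ys) = run C (run C v xs) ys"
  by (induction xs arbitrary: v) auto

fun alternating :: "'i \<Rightarrow> 'i \<Rightarrow> nat \<Rightarrow> 'i list" where
  "alternating i j 0 = []"
| "alternating i j (Suc n) = i # alternating j i n"

lemma length_alternating [simp]: "length (alternating i j n) = n"
  by (induction n arbitrary: i j) auto

definition braid_closes :: "('i \<Rightarrow> 'i \<Rightarrow> int) \<Rightarrow> ('i \<Rightarrow> real) \<Rightarrow> 'i \<Rightarrow> 'i \<Rightarrow> bool" where
  "braid_closes C v i j \<longleftrightarrow> (\<exists>m>0. legal_seq C v (alternating i j m)
     \<and> legal_seq C v (alternating j i m) \<and> run C v (alternating i j m) = run C v (alternating j i m))"

lemma braid_closes_finite_type: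
  assumes gc: "gen_cartan C" and "i \<noteq> j" and "v i < -1" and "v j < -1"
    and finite_type: "C i j * C j i < 4"
  shows "braid_closes C v i j"
proof -
  have zero_iff: "C i j = 0 \<longleftrightarrow> C j i = 0" and "C i j \<le> 0" "C j i \<le> 0"
    and diag: "C i i = 2" "C j j = 2"
    using gc \<open>i \<noteq> j\<close> by (auto simp: gen_cartan_def)
  have bounded: "- C i j \<le> C i j * C j i \<and> - C j i \<le> C i j * C j i" if "C i j \<noteq> 0"
  proof -
    have "1 \<le> - C i j" "1 \<le> - C j i" using that zero_iff \<open>C i j \<le> 0\<close> \<open>C j i \<le> 0\<close> by auto
    then show ?thesis using mult_mono[of 1 "- C i j" "- C j i" "- C j i"]
        mult_mono[of "- C i j" "- C i j" 1 "- C j i"] by auto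
  qed
  have entries: "C i j \<in> {0, -1, -2, -3}" "C j i \<in> {0, -1, -2, -3}"
    using bounded finite_type \<open>C i j \<le> 0\<close> \<open>C j i \<le> 0\<close> zero_iff by fastforce+
  note braid_simps = fire_gen_cartan[OF gc] numeral_eq_Suc fun_eq_iff algebra_simps
  from entries zero_iff finite_type consider
      "C i j = 0" "C j i = 0" | "C i j = -1" "C j i = -1"
    | "C i j = -1" "C j i = -2" | "C i j = -2" "C j i = -1"
    | "C i j = -1" "C j i = -3" | "C i j = -3" "C j i = -1"
    by auto
  then show ?thesis
  proof cases
    case 1 show ?thesis unfolding braid_closes_def
      by (rule exI[of _ 2]) (use 1 assms diag in \<open>auto simp: braid_simps\<close>)
  next
    case 2 show ?thesis unfolding braid_closes_def
      by (rule exI[of _ 3]) (use 2 assms diag in \<open>auto simp: braid_simps\<close>)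
  next
    case 3 show ?thesis unfolding braid_closes_def
      by (rule exI[of _ 4]) (use 3 assms diag in \<open>auto simp: braid_simps\<close>)
  next
    case 4 show ?thesis unfolding braid_closes_def
      by (rule exI[of _ 4]) (use 4 assms diag in \<open>auto simp: braid_simps\<close>)
  next
    case 5 show ?thesis unfolding braid_closes_def
      by (rule exI[of _ 6]) (use 5 assms diag in \<open>auto simp: braid_simps\<close>)
  next
    case 6 show ?thesis unfolding braid_closes_def
      by (rule exI[of _ 6]) (use 6 assms diag in \<open>auto simp: braid_simps\<close>)
  qed
qed

text \<open>Firing \<open>i\<close> re-establishes the invariant with \<open>i\<close> and \<open>j\<close> swapped precisely because
  \<open>c\<^sub>i\<^sub>j c\<^sub>j\<^sub>i \<ge> 4\<close>: the second conjunct makes \<open>j\<close> fireable next, the third keeps the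
  amplitudes from shrinking.\<close>

definition alternation_inv :: "('i \<Rightarrow> 'i \<Rightarrow> int) \<Rightarrow> ('i \<Rightarrow> real) \<Rightarrow> 'i \<Rightarrow> 'i \<Rightarrow> bool" where
  "alternation_inv C v i j \<longleftrightarrow> v i < -1 \<and> v j - of_int (C i j) * v i < -1
     \<and> 2 * v j \<le> of_int (C i j) * v i"

lemma alternation_inv_init:
  assumes gc: "gen_cartan C" and "i \<noteq> j" and "v i < -1" and "v j < -1"
    and "C i j * C j i \<ge> 4"
  shows "alternation_inv C v i j"
proof -
  have "C i j \<le> 0" using gc \<open>i \<noteq> j\<close> by (simp add: gen_cartan_def)
  moreover have "C i j \<noteq> 0" using \<open>C i j * C j i \<ge> 4\<close> by auto
  ultimately have "C i j \<le> -1" by simp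
  then have "of_int (C i j) * v i \<ge> - v i"
    using mult_right_mono_neg[of "of_int (C i j)" "-1" "v i"] \<open>v i < -1\<close> by simp
  then show ?thesis using assms unfolding alternation_inv_def by auto
qed

lemma alternation_inv_fire:
  assumes gc: "gen_cartan C" and "i \<noteq> j" and prod: "C i j * C j i \<ge> 4"
    and inv: "alternation_inv C v i j"
  shows "alternation_inv C (fire C i v) j i"
proof -
  define a b where "a = - real_of_int (C i j)" and "b = - real_of_int (C j i)"
  define x z where "x = - v i" and "z = - (v j + a * v i)"
  have "C i i = 2" "a \<ge> 0" "b \<ge> 0" using gc \<open>i \<noteq> j\<close> by (auto simp: gen_cartan_def a_def b_def)
  have "a * b \<ge> 4" using prod unfolding a_def b_def by (simp flip: of_int_mult)
  have "x > 1" "z > 1" "2 * z \<ge> a * x"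
    using inv unfolding alternation_inv_def a_def x_def z_def by (auto simp: algebra_simps)
  have "b * (2 * z) \<ge> b * (a * x)" using \<open>2 * z \<ge> a * x\<close> \<open>b \<ge> 0\<close> by (rule mult_left_mono)
  moreover have "(a * b) * x \<ge> 4 * x" using \<open>a * b \<ge> 4\<close> \<open>x > 1\<close> by (intro mult_right_mono) auto
  ultimately have "b * z \<ge> 2 * x" by (simp add: algebra_simps)
  moreover have "fire C i v j = - z" "fire C i v i = x"
    using \<open>i \<noteq> j\<close> \<open>C i i = 2\<close> unfolding fire_gen_cartan[OF gc] z_def a_def x_def
    by (auto simp: algebra_simps)
  ultimately show ?thesis
    using \<open>x > 1\<close> \<open>z > 1\<close> unfolding alternation_inv_def b_def by (auto simp: algebra_simps)
qed

lemma alternation_inv_legal: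
  assumes gc: "gen_cartan C" and "i \<noteq> j" and "C i j * C j i \<ge> 4"
    and "alternation_inv C v i j"
  shows "legal_seq C v (alternating i j n)"
  using assms(2-)
proof (induction n arbitrary: v i j)
  case 0
  then show ?case by simp
next
  case (Suc n)
  have "alternation_inv C (fire C i v) j i"
    using alternation_inv_fire[OF gc Suc.prems] .
  with Suc.prems have "legal_seq C (fire C i v) (alternating j i n)"
    by (intro Suc.IH) (auto simp: mult.commute)
  with Suc.prems show ?case by (simp add: alternation_inv_def)
qed

lemma braid_closes_or_unbounded:
  assumes gc: "gen_cartan C" and "i \<noteq> j" and "v i < -1" and "v j < -1"
  shows "braid_closes C v i j \<or> (\<forall>n. legal_seq C v (alternating i j n))"
proof (cases "C i j * C j i < 4")
  case True
  then show ?thesis using braid_closes_finite_type[OF assms] by blast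
next
  case False
  then show ?thesis
    using alternation_inv_legal[OF gc \<open>i \<noteq> j\<close> _ alternation_inv_init[OF assms]] by simp
qed

definition completes_every_legal_seq :: "('i \<Rightarrow> 'i \<Rightarrow> int) \<Rightarrow> ('i \<Rightarrow> real) \<Rightarrow> 'i list \<Rightarrow> bool" where
  "completes_every_legal_seq C v xs \<longleftrightarrow> (\<forall>ys. legal_seq C v ys \<longrightarrow> length ys \<le> length xs
     \<and> (\<exists>zs. legal_seq C v (ys @ zs) \<and> length (ys @ zs) = length xs \<and> run C v (ys @ zs) = run C v xs))"

lemma other_first_move_completes:
  assumes gc: "gen_cartan C"
    and IH: "\<And>w xs. legal_seq C w xs \<Longrightarrow> length xs = n \<Longrightarrow> terminal (run C w xs)
               \<Longrightarrow> completes_every_legal_seq C w xs"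
    and legal: "legal_seq C (fire C i v) xs" and len: "length xs = n"
    and terminates: "terminal (run C (fire C i v) xs)"
    and "v i < -1" and "v j < -1"
  shows "\<exists>xs'. legal_seq C (fire C j v) xs' \<and> length xs' = n
           \<and> run C (fire C j v) xs' = run C (fire C i v) xs"
proof (cases "i = j")
  case True
  then show ?thesis using legal len by blast
next
  case False
  have completes: "completes_every_legal_seq C (fire C i v) xs"
    using IH[OF legal len terminates] .
  from braid_closes_or_unbounded[OF gc False \<open>v i < -1\<close> \<open>v j < -1\<close>] show ?thesis
  proof
    assume "\<forall>m. legal_seq C v (alternating i j m)"
    then have "legal_seq C v (alternating i j (Suc (Suc n)))" by blast
    then have "legal_seq C (fire C i v) (alternating j i (Suc n))" by simp
    with completes have "length (alternating j i (Suc n)) \<le> length xs"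
      unfolding completes_every_legal_seq_def by blast
    with len show ?thesis by simp
  next
    assume "braid_closes C v i j"
    then obtain m where "legal_seq C v (alternating i j (Suc m))"
      and "legal_seq C v (alternating j i (Suc m))"
      and "run C v (alternating i j (Suc m)) = run C v (alternating j i (Suc m))"
      unfolding braid_closes_def by (auto simp: gr0_conv_Suc)
    then have legal_ji: "legal_seq C (fire C i v) (alternating j i m)"
      and legal_ij: "legal_seq C (fire C j v) (alternating i j m)"
      and braid: "run C (fire C i v) (alternating j i m) = run C (fire C j v) (alternating i j m)"
      by simp_all
    from completes legal_ji obtain zs where
      "legal_seq C (fire C i v) (alternating j i m @ zs)"
      "length (alternating j i m @ zs) = length xs"
      "run C (fire C i v) (alternating j i m @ zs) = run C (fire C i v) xs"
      unfolding completes_every_legal_seq_def by blast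
    with legal_ij braid len show ?thesis
      by (intro exI[of _ "alternating i j m @ zs"]) (simp add: legal_seq_append run_append)
  qed
qed

lemma legal_terminal_completes_every_legal_seq:
  assumes gc: "gen_cartan C"
  shows "legal_seq C v xs \<Longrightarrow> terminal (run C v xs) \<Longrightarrow> completes_every_legal_seq C v xs"
proof (induction "length xs" arbitrary: v xs)
  case 0
  then have "ys = []" if "legal_seq C v ys" for ys
    using that by (cases ys) (auto simp: terminal_def)
  with "0.hyps" "0.prems"(1) show ?case unfolding completes_every_legal_seq_def by force
next
  case (Suc n)
  then obtain i xs' where xs: "xs = i # xs'" "length xs' = n" by (cases xs) auto
  show ?case
    unfolding completes_every_legal_seq_def
  proof (intro allI impI)
    fix ys
    assume "legal_seq C v ys"
    show "length ys \<le> length xs \<and> (\<exists>zs. legal_seq C v (ys @ zs) \<and> length (ys @ zs) = length xs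
      \<and> run C v (ys @ zs) = run C v xs)"
    proof (cases ys)
      case Nil
      with Suc.prems show ?thesis by auto
    next
      case (Cons j ys')
      with \<open>legal_seq C v ys\<close> have "v j < -1" "legal_seq C (fire C j v) ys'" by auto
      moreover have "v i < -1" "legal_seq C (fire C i v) xs'"
        "terminal (run C (fire C i v) xs')"
        using Suc.prems xs by auto
      ultimately obtain xs'' where xs'': "legal_seq C (fire C j v) xs''" "length xs'' = n"
        "run C (fire C j v) xs'' = run C v xs"
        using other_first_move_completes[OF gc Suc.hyps(1) _ \<open>length xs' = n\<close>] xs by force
      with Suc.hyps(1) Suc.prems(2) have "completes_every_legal_seq C (fire C j v) xs''"
        by simp
      with xs'' \<open>legal_seq C (fire C j v) ys'\<close> obtain zs where
        "length ys' \<le> n" "legal_seq C (fire C j v) (ys' @ zs)" "length (ys' @ zs) = n"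
        "run C (fire C j v) (ys' @ zs) = run C v xs"
        unfolding completes_every_legal_seq_def by auto
      with Cons xs \<open>v j < -1\<close> show ?thesis by auto
    qed
  qed
qed

theorem lemma3p4:
  fixes C :: "'i::finite \<Rightarrow> 'i \<Rightarrow> int" and v :: "'i \<Rightarrow> real"
    and xs ys :: "'i list" and r s :: nat
  assumes "extended_dynkin C"
    and "legal_seq C v xs" and "length xs = r" and "terminal (run C v xs)"
    and "legal_seq C v ys" and "length ys = s"
  shows "s \<le> r \<and> (\<exists>zs. legal_seq C v (ys @ zs) \<and> length (ys @ zs) = r
                        \<and> run C v (ys @ zs) = run C v xs)"
proof -
  have "gen_cartan C" using \<open>extended_dynkin C\<close> by (simp add: extended_dynkin_def)
  then have "completes_every_legal_seq C v xs"
    using assms(2,4) by (rule legal_terminal_completes_every_legal_seq)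
  with assms(3,5,6) show ?thesis unfolding completes_every_legal_seq_def by blast
qed

end
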